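(* Let $(Z_n)_{n\ge0}$ be a linear fractional Galton–Watson process in i.i.d. random environment (as in the context) which is subcritical, i.e. $R^{(-1)}_\infty<\infty=R_\infty$ a.s., and let $l\in\mathbb{N}$. Put $c_l:=\Pi_l(1+R^{(-1)}_l)$, $R^{(-1)}_{l,\infty}:=\Pi_l(R^{(-1)}_\infty-R^{(-1)}_l)=\sum_{k\ge1}\frac{\Pi_l}{\Pi_{k+l}}B_{k+l}$ and $$\vartheta_l:=\frac{1}{c_l}+\Big(1-\frac{1}{c_l}\Big)\frac{1}{1+R^{(-1)}_{l,\infty}}.$$ Then, as $n\to\infty$, $$\big\|\mathbf{P}^{(n+l:1)}(Z_n\in\cdot\mid Z_n>0,Z_{n+l}=0)-\mathrm{Geom}_+(\vartheta_l)\big\|\to0\quad\text{a.s.},$$ $$\mathbf{E}^{(n+l:1)}(Z_n\mid Z_n>0,Z_{n+l}=0)\to\vartheta_l^{-1}\quad\text{a.s.},$$ and $$\frac{\Pi_{n+l}}{\Pi_l}\,\mathbf{P}^{(n+l:1)}(Z_n>0,Z_{n+l}=0)\ \to\ \frac{1-c_l^{-1}}{1+R^{(-1)}_{l,\infty}c_l^{-1}}\cdot\frac{1}{1+R^{(-1)}_{l,\infty}}\quad\text{a.s.}$$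
   Context: Let $(A_n,B_n)_{n\ge1}$ be i.i.d. copies of $(A,B)$ with $\mathbb{P}(A>0,B>0,A+B\ge1)=1$; $e_n=(A_n,B_n)$. For $a,b>0$, $a+b\ge1$, $LF(a,b)$ is the distribution on $\mathbb{N}_0$ whose generating function $f$ satisfies $1/(1-f(s))=a/(1-s)+b$, $s\in[0,1)$. $\mathrm{Geom}_+(p)$ is the geometric law on $\{1,2,\dots\}$ with weights $p(1-p)^{k-1}$. $(Z_n)$, $Z_0=1$, is a Galton–Watson process in random environment: individuals reproduce independently with linear fractional offspring laws determined by the environment. $\Pi_0=1$, $\Pi_n=\prod_{k=1}^nA_k$, $R_n=\sum_{k=1}^n\Pi_{k-1}B_k$, $R_\infty=\lim R_n$, $R^{(-1)}_n=\sum_{k=1}^n\Pi_k^{-1}B_k$, $R^{(-1)}_\infty=\lim R^{(-1)}_n$. For $N\in\mathbb{N}$, $\mathbf{P}^{(N:1)},\mathbf{E}^{(N:1)}$ denote quenched probability/expectation for the process in the reversed environment: given $(e_1,\dots,e_N)$, each individual of generation $k-1$ ($1\le k\le N$) independently has offspring law $LF(A_{N-k+1},B_{N-k+1})$. $\|\cdot\|$ is total variation. *)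

theory Defs
  imports "HOL-Probability.Probability"
begin

definition LF :: "real \<Rightarrow> real \<Rightarrow> nat pmf" where
  "LF a b = (THE p. \<forall>s\<in>{0..<1::real}.
      1 / (1 - (\<Sum>k. pmf p k * s ^ k)) = a / (1 - s) + b)"

definition Geom_plus :: "real \<Rightarrow> nat pmf" where
  "Geom_plus p = map_pmf Suc (geometric_pmf p)"

definition tv_dist :: "nat pmf \<Rightarrow> nat pmf \<Rightarrow> real" where
  "tv_dist p q = (SUP S. \<bar>measure_pmf.prob p S - measure_pmf.prob q S\<bar>)"

fun conv_pow :: "nat pmf \<Rightarrow> nat \<Rightarrow> nat pmf" where
  "conv_pow q 0 = return_pmf 0"
| "conv_pow q (Suc m) = bind_pmf q (\<lambda>x. map_pmf ((+) x) (conv_pow q m))"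

(* Quenched law of the trajectory [Z_0, ..., Z_n] of a Galton-Watson process
   in varying environment, Z_0 = 1, where each individual of generation k-1
   (1 <= k <= n) has offspring law  env k, independently. *)
fun gw_traj :: "(nat \<Rightarrow> nat pmf) \<Rightarrow> nat \<Rightarrow> nat list pmf" where
  "gw_traj env 0 = return_pmf [1]"
| "gw_traj env (Suc n) =
     bind_pmf (gw_traj env n) (\<lambda>zs. map_pmf (\<lambda>z. zs @ [z]) (conv_pow (env (Suc n)) (last zs)))"

definition rev_env :: "(nat \<Rightarrow> 'a \<Rightarrow> real) \<Rightarrow> (nat \<Rightarrow> 'a \<Rightarrow> real) \<Rightarrow> nat \<Rightarrow> 'a \<Rightarrow> nat \<Rightarrow> nat pmf" where
  "rev_env A B N \<omega> k = LF (A (N - k + 1) \<omega>) (B (N - k + 1) \<omega>)"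

definition Pq :: "(nat \<Rightarrow> 'a \<Rightarrow> real) \<Rightarrow> (nat \<Rightarrow> 'a \<Rightarrow> real) \<Rightarrow> nat \<Rightarrow> 'a \<Rightarrow> nat list pmf" where
  "Pq A B N \<omega> = gw_traj (rev_env A B N \<omega>) N"

definition Pi_env :: "(nat \<Rightarrow> 'a \<Rightarrow> real) \<Rightarrow> nat \<Rightarrow> 'a \<Rightarrow> real" where
  "Pi_env A n \<omega> = (\<Prod>k=1..n. A k \<omega>)"

definition R_env :: "(nat \<Rightarrow> 'a \<Rightarrow> real) \<Rightarrow> (nat \<Rightarrow> 'a \<Rightarrow> real) \<Rightarrow> nat \<Rightarrow> 'a \<Rightarrow> real" where
  "R_env A B n \<omega> = (\<Sum>k=1..n. Pi_env A (k - 1) \<omega> * B k \<omega>)"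

definition Rm1_env :: "(nat \<Rightarrow> 'a \<Rightarrow> real) \<Rightarrow> (nat \<Rightarrow> 'a \<Rightarrow> real) \<Rightarrow> nat \<Rightarrow> 'a \<Rightarrow> real" where
  "Rm1_env A B n \<omega> = (\<Sum>k=1..n. B k \<omega> / Pi_env A k \<omega>)"

definition Rm1_inf :: "(nat \<Rightarrow> 'a \<Rightarrow> real) \<Rightarrow> (nat \<Rightarrow> 'a \<Rightarrow> real) \<Rightarrow> 'a \<Rightarrow> real" where
  "Rm1_inf A B \<omega> = lim (\<lambda>n. Rm1_env A B n \<omega>)"

definition c_env :: "(nat \<Rightarrow> 'a \<Rightarrow> real) \<Rightarrow> (nat \<Rightarrow> 'a \<Rightarrow> real) \<Rightarrow> nat \<Rightarrow> 'a \<Rightarrow> real" where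
  "c_env A B l \<omega> = Pi_env A l \<omega> * (1 + Rm1_env A B l \<omega>)"

definition Rm1_tail :: "(nat \<Rightarrow> 'a \<Rightarrow> real) \<Rightarrow> (nat \<Rightarrow> 'a \<Rightarrow> real) \<Rightarrow> nat \<Rightarrow> 'a \<Rightarrow> real" where
  "Rm1_tail A B l \<omega> = Pi_env A l \<omega> * (Rm1_inf A B \<omega> - Rm1_env A B l \<omega>)"

definition theta_env :: "(nat \<Rightarrow> 'a \<Rightarrow> real) \<Rightarrow> (nat \<Rightarrow> 'a \<Rightarrow> real) \<Rightarrow> nat \<Rightarrow> 'a \<Rightarrow> real" where
  "theta_env A B l \<omega> = 1 / c_env A B l \<omega>
      + (1 - 1 / c_env A B l \<omega>) * (1 / (1 + Rm1_tail A B l \<omega>))"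

end

theory Submission
  imports Defs
begin

text \<open>
  A linear fractional generating function f of LF(a, b) acts on h(s) = 1 / (1 - s) as the affine
  map h \<mapsto> a h + b. Compositions of such maps are again of this form, so in the reversed
  environment Z_n, started from one individual, is linear fractional with parameters
  Pi_{n+l} / Pi_l and Pi_{n+l} (R^(-1)_{n+l} - R^(-1)_l), and each individual of generation n
  has no descendants in generation n + l with probability q = 1 - 1 / c_l. Hence
  P(Z_n = k, Z_{n+l} = 0) = P(Z_n = k) q^k, and tilting the geometric tail of a linear fractional
  law by q^k gives a geometric law again: conditionally on Z_n > 0 and Z_{n+l} = 0, Z_n is exactly
  Geom_+ with the parameter \<vartheta>_l in which R^(-1)_{l,\<infinity>} is replaced by its partial sum up to n + l.
  All three limits then follow from the convergence of R^(-1)_n by continuity.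

  The argument is pathwise: it only uses A_i > 0, B_i \<ge> 0, A_i + B_i \<ge> 1 and the convergence of
  R^(-1)_n.
\<close>

section \<open>Probability generating functions\<close>

definition pgf :: "nat pmf \<Rightarrow> real \<Rightarrow> real" where
  "pgf p s = measure_pmf.expectation p (\<lambda>k. s ^ k)"

lemma integrable_power_pmf:
  fixes s :: real
  assumes "\<bar>s\<bar> \<le> 1"
  shows "integrable (measure_pmf p) (\<lambda>k. s ^ k)"
  by (rule measure_pmf.integrable_const_bound[where B = 1])
     (use assms in \<open>simp_all add: power_abs power_le_one\<close>)

lemma pgf_sums:
  fixes s :: real
  assumes "\<bar>s\<bar> \<le> 1"
  shows "(\<lambda>k. pmf p k * s ^ k) sums pgf p s"
proof -
  have "integrable (count_space UNIV) (\<lambda>k. pmf p k * s ^ k)"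
    using integrable_power_pmf[OF assms, of p]
    unfolding measure_pmf_eq_density by (subst (asm) integrable_density) auto
  moreover have "pgf p s = (\<integral>k. pmf p k * s ^ k \<partial>count_space UNIV)"
    unfolding pgf_def measure_pmf_eq_density by (subst integral_density) auto
  ultimately show ?thesis
    by (simp add: sums_integral_count_space_nat)
qed

lemma pgf_nonneg: "0 \<le> s \<Longrightarrow> 0 \<le> pgf p s"
  unfolding pgf_def by (intro integral_nonneg_AE) simp

lemma abs_pgf_le_1:
  assumes "\<bar>s\<bar> \<le> 1"
  shows "\<bar>pgf p s\<bar> \<le> 1"
proof -
  have "\<bar>pgf p s\<bar> \<le> measure_pmf.expectation p (\<lambda>k. \<bar>s ^ k\<bar>)"
    unfolding pgf_def using integral_norm_bound[of p "\<lambda>k. s ^ k"] by simp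
  also have "\<dots> \<le> measure_pmf.expectation p (\<lambda>_. 1)"
    using assms integrable_power_pmf[of "\<bar>s\<bar>" p]
    by (intro integral_mono) (simp_all add: power_abs power_le_one)
  finally show ?thesis by simp
qed

lemma pgf_1 [simp]: "pgf p 1 = 1"
  by (simp add: pgf_def)

lemma pgf_return_pmf [simp]: "pgf (return_pmf k) s = s ^ k"
  by (simp add: pgf_def)

lemma pgf_0: "pgf p 0 = pmf p 0"
proof -
  have "(\<lambda>k. (0::real) ^ k) = indicator {0}"
    by (auto simp: indicator_def)
  then show ?thesis
    by (simp add: pgf_def measure_pmf_single)
qed

lemma integral_bind_pmf_bounded:
  fixes g :: "'b \<Rightarrow> real"
  assumes "\<And>y. \<bar>g y\<bar> \<le> B"
  shows "measure_pmf.expectation (bind_pmf p f) g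
       = measure_pmf.expectation p (\<lambda>x. measure_pmf.expectation (f x) g)"
  unfolding measure_pmf_bind
  by (rule integral_bind[where K = "count_space UNIV" and B = B and B' = 1])
     (use assms measurable_measure_pmf[of f] in
       \<open>auto simp: measure_pmf.emeasure_space_1\<close>)

lemma pgf_bind_pmf:
  assumes "\<bar>s\<bar> \<le> 1"
  shows "pgf (bind_pmf p f) s = measure_pmf.expectation p (\<lambda>x. pgf (f x) s)"
  unfolding pgf_def
  by (rule integral_bind_pmf_bounded[where B = 1]) (use assms in \<open>simp add: power_abs power_le_one\<close>)

lemma pgf_conv_pow:
  assumes "\<bar>s\<bar> \<le> 1"
  shows "pgf (conv_pow p m) s = pgf p s ^ m"
proof (induction m)
  case 0
  then show ?case by (simp add: pgf_def)
next
  case (Suc m)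
  have "pgf (conv_pow p (Suc m)) s
      = measure_pmf.expectation p (\<lambda>x. pgf (map_pmf ((+) x) (conv_pow p m)) s)"
    by (simp only: conv_pow.simps pgf_bind_pmf[OF assms])
  also have "(\<lambda>x. pgf (map_pmf ((+) x) (conv_pow p m)) s) = (\<lambda>x. s ^ x * pgf (conv_pow p m) s)"
    by (simp add: pgf_def power_add)
  also have "measure_pmf.expectation p (\<lambda>x. s ^ x * pgf (conv_pow p m) s)
      = pgf p s * pgf (conv_pow p m) s"
    unfolding pgf_def by (rule integral_mult_left_zero)
  finally show ?case
    by (simp add: Suc)
qed

lemma power_series_coeff_eq_0:
  fixes d :: "nat \<Rightarrow> real"
  assumes "summable d"
    and zero: "\<And>s. 0 < s \<Longrightarrow> s < 1 \<Longrightarrow> (\<Sum>k. d k * s ^ k) = 0"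
  shows "d m = 0"
proof (induction m rule: less_induct)
  case (less m)
  define e where "e k = d (k + m)" for k
  have "summable (\<lambda>k. e k * 1 ^ k)"
    using summable_ignore_initial_segment[OF \<open>summable d\<close>, of m] by (simp add: e_def)
  then have "isCont (\<lambda>x. \<Sum>k. e k * x ^ k) 0"
    by (rule isCont_powser) simp
  then have lim: "((\<lambda>x. \<Sum>k. e k * x ^ k) \<longlongrightarrow> e 0) (at_right 0)"
    unfolding isCont_def by (auto intro: tendsto_mono[OF at_le[OF subset_UNIV]])
  have tail_zero: "(\<Sum>k. e k * s ^ k) = 0" if s: "0 < s" "s < 1" for s
  proof -
    have "summable (\<lambda>k. d k * s ^ k)"
      using powser_inside[of d 1 s] \<open>summable d\<close> s by simp
    then have "(\<lambda>k. d k * s ^ k) sums 0"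
      by (simp add: sums_iff zero[OF s])
    moreover have "d i * s ^ i = 0" if "i < m" for i
      using less that by simp
    ultimately have "(\<lambda>k. d (k + m) * s ^ (k + m)) sums 0"
      using sums_zero_iff_shift[of m "\<lambda>k. d k * s ^ k" 0] by simp
    then have "(\<lambda>k. s ^ m * (e k * s ^ k)) sums 0"
      by (simp add: e_def power_add mult_ac)
    then have "(\<lambda>k. e k * s ^ k) sums (0 / s ^ m)"
      using s by (intro sums_mult_D) simp_all
    then show ?thesis
      by (simp add: sums_iff)
  qed
  have "eventually (\<lambda>x. (\<Sum>k. e k * x ^ k) = 0) (at_right 0)"
    using eventually_at_right_real[of 0 1] by (rule eventually_mono) (auto intro: tail_zero)
  with lim have "((\<lambda>_. 0) \<longlongrightarrow> e 0) (at_right (0::real))"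
    by (rule Lim_transform_eventually)
  then have "0 = e 0"
    by (simp add: tendsto_const_iff)
  then show ?case
    by (simp add: e_def)
qed

lemma pmf_eqI_pgf:
  assumes "\<And>s. 0 < s \<Longrightarrow> s < 1 \<Longrightarrow> pgf p s = pgf q s"
  shows "p = q"
proof (rule pmf_eqI)
  fix m
  have "(\<lambda>k. pmf p k - pmf q k) sums (pgf p 1 - pgf q 1)"
    using sums_diff[OF pgf_sums[of 1 p] pgf_sums[of 1 q]] by simp
  then have "summable (\<lambda>k. pmf p k - pmf q k)"
    by (rule sums_summable)
  moreover have "(\<Sum>k. (pmf p k - pmf q k) * s ^ k) = 0" if "0 < s" "s < 1" for s
  proof -
    have "(\<lambda>k. pmf p k * s ^ k - pmf q k * s ^ k) sums (pgf p s - pgf q s)"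
      using that by (intro sums_diff pgf_sums) auto
    then show ?thesis
      using assms[OF that] by (simp add: sums_iff left_diff_distrib)
  qed
  ultimately have "pmf p m - pmf q m = 0"
    by (rule power_series_coeff_eq_0)
  then show "pmf p m = pmf q m" by simp
qed

section \<open>Geometric and linear fractional laws\<close>

lemma pmf_Geom_plus_0 [simp]: "pmf (Geom_plus p) 0 = 0"
  unfolding Geom_plus_def by (simp add: pmf_map_outside)

lemma pmf_Geom_plus_Suc:
  assumes "0 < p" "p \<le> 1"
  shows "pmf (Geom_plus p) (Suc k) = p * (1 - p) ^ k"
proof -
  have "pmf (Geom_plus p) (Suc k) = pmf (geometric_pmf p) k"
    unfolding Geom_plus_def by (rule pmf_map_inj') (simp add: inj_def)
  then show ?thesis
    using assms by simp
qed

lemma pgf_Geom_plus: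
  assumes "0 < p" "p \<le> 1" "\<bar>s\<bar> \<le> 1"
  shows "pgf (Geom_plus p) s = s * p / (1 - (1 - p) * s)"
proof -
  have "\<bar>(1 - p) * s\<bar> < 1"
    using assms mult_left_le[of "\<bar>s\<bar>" "1 - p"] by (simp add: abs_mult)
  then have "(\<lambda>k. s * p * ((1 - p) * s) ^ k) sums (s * p * (1 / (1 - (1 - p) * s)))"
    by (intro sums_mult geometric_sums) simp
  then have "(\<lambda>k. pmf (Geom_plus p) (Suc k) * s ^ Suc k) sums (s * p / (1 - (1 - p) * s))"
    using assms by (simp add: pmf_Geom_plus_Suc power_mult_distrib mult_ac)
  then have "(\<lambda>k. pmf (Geom_plus p) k * s ^ k) sums (s * p / (1 - (1 - p) * s))"
    using sums_Suc_iff[of "\<lambda>k. pmf (Geom_plus p) k * s ^ k"] by simp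
  then show ?thesis
    using pgf_sums[OF assms(3)] by (simp add: sums_iff)
qed

lemma expectation_Geom_plus:
  assumes "0 < p" "p \<le> 1"
  shows "measure_pmf.expectation (Geom_plus p) real = 1 / p"
proof -
  have "measure_pmf.expectation (Geom_plus p) real
      = measure_pmf.expectation (geometric_pmf p) (\<lambda>k. 1 + real k)"
    by (simp add: Geom_plus_def)
  also have "\<dots> = 1 + (1 - p) / p"
    using assms integrable_real_geometric_pmf[of p] expectation_geometric_pmf[of p]
    by (subst Bochner_Integration.integral_add) auto
  finally show ?thesis
    using assms by (simp add: field_simps)
qed

lemma tendsto_pmf_Geom_plus:
  assumes "\<And>n. 0 < t n \<and> t n \<le> 1" "0 < t0" "t0 \<le> 1" and "t \<longlonglongrightarrow> t0"
  shows "(\<lambda>n. pmf (Geom_plus (t n)) k) \<longlonglongrightarrow> pmf (Geom_plus t0) k"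
proof (cases k)
  case (Suc k')
  have "(\<lambda>n. t n * (1 - t n) ^ k') \<longlonglongrightarrow> t0 * (1 - t0) ^ k'"
    by (intro tendsto_intros assms)
  then show ?thesis
    using assms Suc by (simp add: pmf_Geom_plus_Suc)
qed simp

lemma pgf_LF_mixture:
  assumes "0 < a" "0 \<le> b" "1 \<le> a + b" "0 \<le> s" "s < 1"
  shows "pgf (bind_pmf (bernoulli_pmf (1 / (a + b)))
                 (\<lambda>x. if x then Geom_plus (a / (a + b)) else return_pmf 0)) s
       = 1 - 1 / (a / (1 - s) + b)"
proof -
  obtain c where c: "c = a + b" "0 < c"
    using assms by simp
  obtain D where D: "D = c - b * s" "0 < D"
    using assms c mult_left_le[of s b] by simp
  have "pgf (Geom_plus (a / c)) s = s * (a / c) / (1 - (1 - a / c) * s)"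
    using assms c by (intro pgf_Geom_plus) simp_all
  also have "1 - (1 - a / c) * s = D / c"
    using c D(1) by (simp add: field_simps)
  finally have "1 - pgf (bind_pmf (bernoulli_pmf (1 / c))
                 (\<lambda>x. if x then Geom_plus (a / c) else return_pmf 0)) s
      = 1 - (1 / c * (s * (a / c) / (D / c)) + (1 - 1 / c))"
    using assms c by (simp add: pgf_bind_pmf)
  also have "\<dots> = (D - s * a) / (c * D)"
    using c(2) D(2) by (simp add: field_simps)
  also have "D - s * a = c * (1 - s)"
    using c(1) D(1) by (simp add: algebra_simps)
  also have "c * (1 - s) / (c * D) = 1 / (D / (1 - s))"
    using c(2) by simp
  also have "D / (1 - s) = a / (1 - s) + b"
    using assms c(1) D(1) by (simp add: field_simps)
  finally show ?thesis
    by (simp add: c(1) cong: if_cong)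
qed

lemma LF_eqI:
  assumes "\<And>s. 0 \<le> s \<Longrightarrow> s < 1 \<Longrightarrow> pgf p s = 1 - 1 / (a / (1 - s) + b)"
  shows "LF a b = p"
  unfolding LF_def
proof (rule the_equality)
  show "\<forall>s\<in>{0..<1::real}. 1 / (1 - (\<Sum>k. pmf p k * s ^ k)) = a / (1 - s) + b"
    using assms pgf_sums[of _ p] by (simp add: sums_iff)
next
  fix q
  assume q: "\<forall>s\<in>{0..<1::real}. 1 / (1 - (\<Sum>k. pmf q k * s ^ k)) = a / (1 - s) + b"
  show "q = p"
  proof (rule pmf_eqI_pgf)
    fix s :: real
    assume s: "0 < s" "s < 1"
    have "pgf q s = (\<Sum>k. pmf q k * s ^ k)"
      using pgf_sums[of s q] s by (simp add: sums_iff)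
    also have "\<dots> = 1 - 1 / (a / (1 - s) + b)"
      using q s by (simp flip: q[rule_format])
    finally show "pgf q s = pgf p s"
      using assms s by simp
  qed
qed

lemma LF_eq_mixture:
  assumes "0 < a" "0 \<le> b" "1 \<le> a + b"
  shows "LF a b = bind_pmf (bernoulli_pmf (1 / (a + b)))
                    (\<lambda>x. if x then Geom_plus (a / (a + b)) else return_pmf 0)"
  using assms by (intro LF_eqI pgf_LF_mixture)

lemma pgf_LF:
  assumes "0 < a" "0 \<le> b" "1 \<le> a + b" "0 \<le> s" "s < 1"
  shows "pgf (LF a b) s = 1 - 1 / (a / (1 - s) + b)"
  using assms by (simp add: LF_eq_mixture pgf_LF_mixture)

lemma pmf_LF_Suc:
  assumes "0 < a" "0 \<le> b" "1 \<le> a + b"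
  shows "pmf (LF a b) (Suc k) = a * b ^ k / (a + b) ^ (k + 2)"
proof -
  have "1 - a / (a + b) = b / (a + b)"
    using assms by (simp add: field_simps)
  then show ?thesis
    using assms
    by (simp add: LF_eq_mixture pmf_bind pmf_Geom_plus_Suc field_simps)
qed

lemma pmf_LF_Suc_tilted:
  assumes "0 < a" "0 \<le> b" "1 \<le> a + b" "0 \<le> q" "q \<le> 1"
  shows "pmf (LF a b) (Suc k) * q ^ Suc k
       = q * a / ((a + b) * (a + b - q * b)) * pmf (Geom_plus (1 - q * b / (a + b))) (Suc k)"
proof -
  define c where "c = a + b"
  define D where "D = c - q * b"
  have "q * b \<le> b"
    using assms mult_left_le_one_le[of b q] by simp
  then have c: "0 < c" and D: "0 < D" "D \<le> c"
    using assms by (simp_all add: c_def D_def)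
  have theta: "1 - q * b / c = D / c"
    using c by (simp add: D_def field_simps)
  have "1 - D / c = q * b / c"
    using c by (simp add: D_def field_simps)
  moreover have "0 < D / c" "D / c \<le> 1"
    using c D by simp_all
  ultimately have G: "pmf (Geom_plus (1 - q * b / c)) (Suc k) = D / c * (q * b / c) ^ k"
    unfolding theta using pmf_Geom_plus_Suc[of "D / c" k] by simp
  have L: "pmf (LF a b) (Suc k) = a * b ^ k / c ^ (k + 2)"
    unfolding c_def using assms(1-3) by (rule pmf_LF_Suc)
  show ?thesis
    unfolding c_def[symmetric] D_def[symmetric] G L
    using c D by (simp add: field_simps)
qed

section \<open>Conditioning and total variation\<close>

lemma measure_cond_pmf:
  assumes "set_pmf p \<inter> S \<noteq> {}"
  shows "measure_pmf.prob (cond_pmf p S) X = measure_pmf.prob p (S \<inter> X) / measure_pmf.prob p S"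
proof -
  have "emeasure (measure_pmf p) S \<noteq> 0"
    using assms by (simp add: emeasure_measure_pmf_not_zero)
  then show ?thesis
    unfolding cond_pmf.rep_eq[OF assms]
    by (simp add: measure_pmf.emeasure_eq_measure)
qed

lemma measure_eq_if_fibres_proportional:
  fixes f :: "'a \<Rightarrow> nat"
  assumes "\<And>k. measure_pmf.prob p (S \<inter> f -` {k}) = C * pmf q k"
  shows "measure_pmf.prob p S = C"
proof -
  have "(\<lambda>k. measure_pmf.prob p (S \<inter> f -` {k})) sums measure_pmf.prob p (\<Union>k. S \<inter> f -` {k})"
    by (intro measure_pmf.finite_measure_UNION) (auto simp: disjoint_family_on_def)
  moreover have "(\<Union>k. S \<inter> f -` {k}) = S"
    by auto
  moreover have "(\<lambda>k. C * pmf q k) sums C"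
    using sums_mult[OF pgf_sums[of 1 q], of C] by simp
  ultimately show ?thesis
    using assms sums_unique2 by force
qed

lemma map_cond_pmf_eq_if_fibres_proportional:
  fixes f :: "'a \<Rightarrow> nat"
  assumes fibres: "\<And>k. measure_pmf.prob p (S \<inter> f -` {k}) = C * pmf q k" and "C \<noteq> 0"
  shows "map_pmf f (cond_pmf p S) = q"
proof (rule pmf_eqI)
  fix k
  have S: "measure_pmf.prob p S = C"
    using fibres by (rule measure_eq_if_fibres_proportional)
  with \<open>C \<noteq> 0\<close> have "set_pmf p \<inter> S \<noteq> {}"
    by (auto simp: measure_pmf_zero_iff)
  then have "pmf (map_pmf f (cond_pmf p S)) k = C * pmf q k / C"
    by (simp add: pmf_map measure_cond_pmf fibres S Int_commute[of "f -` {k}"])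
  then show "pmf (map_pmf f (cond_pmf p S)) k = pmf q k"
    using \<open>C \<noteq> 0\<close> by simp
qed

lemma abs_measure_pmf_diff_le:
  fixes p q :: "nat pmf"
  shows "\<bar>measure_pmf.prob p S - measure_pmf.prob q S\<bar>
     \<le> (\<Sum>k\<le>K. \<bar>pmf p k - pmf q k\<bar>) + (1 - measure_pmf.prob p {..K}) + (1 - measure_pmf.prob q {..K})"
proof -
  have split: "measure_pmf.prob r S = (\<Sum>k\<in>S \<inter> {..K}. pmf r k) + measure_pmf.prob r (S - {..K})"
    for r :: "nat pmf"
  proof -
    have "measure_pmf.prob r S = measure_pmf.prob r (S \<inter> {..K}) + measure_pmf.prob r (S - {..K})"
      by (subst measure_pmf.finite_measure_Union[symmetric]) (auto intro: arg_cong[where f = "measure r"])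
    then show ?thesis
      by (simp add: measure_measure_pmf_finite)
  qed
  have tail: "measure_pmf.prob r (S - {..K}) \<le> 1 - measure_pmf.prob r {..K}" for r :: "nat pmf"
    using measure_pmf.finite_measure_mono[of "S - {..K}" "- {..K}" r] measure_pmf.prob_compl[of "{..K}" r]
    by (auto simp: Compl_eq_Diff_UNIV)
  have "\<bar>(\<Sum>k\<in>S \<inter> {..K}. pmf p k) - (\<Sum>k\<in>S \<inter> {..K}. pmf q k)\<bar> \<le> (\<Sum>k\<in>S \<inter> {..K}. \<bar>pmf p k - pmf q k\<bar>)"
    by (simp add: sum_subtractf[symmetric])
  also have "\<dots> \<le> (\<Sum>k\<le>K. \<bar>pmf p k - pmf q k\<bar>)"
    by (rule sum_mono2) auto
  finally show ?thesis
    using split[of p] split[of q] tail[of p] tail[of q] measure_nonneg[of p "S - {..K}"]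
      measure_nonneg[of q "S - {..K}"]
    by linarith
qed

lemma tv_dist_le:
  fixes p q :: "nat pmf"
  shows "tv_dist p q
     \<le> (\<Sum>k\<le>K. \<bar>pmf p k - pmf q k\<bar>) + (1 - measure_pmf.prob p {..K}) + (1 - measure_pmf.prob q {..K})"
  unfolding tv_dist_def by (rule cSUP_least) (simp, rule abs_measure_pmf_diff_le)

lemma tv_dist_nonneg: "0 \<le> tv_dist p q"
proof -
  have "bdd_above (range (\<lambda>S. \<bar>measure_pmf.prob p S - measure_pmf.prob q S\<bar>))"
    using abs_measure_pmf_diff_le[of p _ q 0] by (intro bdd_aboveI2)
  then have "\<bar>measure_pmf.prob p {} - measure_pmf.prob q {}\<bar> \<le> tv_dist p q"
    unfolding tv_dist_def by (rule cSUP_upper[rotated]) simp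
  then show ?thesis
    by simp
qed

lemma tendsto_tv_dist_if_tendsto_pmf:
  fixes p :: "nat \<Rightarrow> nat pmf"
  assumes "\<And>k. (\<lambda>n. pmf (p n) k) \<longlonglongrightarrow> pmf q k"
  shows "(\<lambda>n. tv_dist (p n) q) \<longlonglongrightarrow> 0"
proof (rule order_tendstoI)
  fix y :: real
  assume "y < 0"
  then show "eventually (\<lambda>n. y < tv_dist (p n) q) sequentially"
    using tv_dist_nonneg by (simp add: less_le_trans)
next
  fix y :: real
  assume "0 < y"
  have "(\<lambda>K. measure_pmf.prob q {..K}) \<longlonglongrightarrow> measure_pmf.prob q (\<Union>K. {..K})"
    by (rule measure_pmf.finite_Lim_measure_incseq) (auto simp: incseq_def)
  moreover have "(\<Union>K. {..K::nat}) = UNIV"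
    by auto
  ultimately have "(\<lambda>K. measure_pmf.prob q {..K}) \<longlonglongrightarrow> 1"
    by simp
  moreover have "1 - y / 4 < 1"
    using \<open>0 < y\<close> by simp
  ultimately have "eventually (\<lambda>K. 1 - y / 4 < measure_pmf.prob q {..K}) sequentially"
    by (rule order_tendstoD(1))
  then obtain K where "1 - y / 4 < measure_pmf.prob q {..K}"
    unfolding eventually_sequentially by blast
  then have K: "1 - measure_pmf.prob q {..K} < y / 4"
    by linarith
  have "(\<lambda>n. (\<Sum>k\<le>K. \<bar>pmf (p n) k - pmf q k\<bar>) + (1 - measure_pmf.prob (p n) {..K})
              + (1 - measure_pmf.prob q {..K}))
      \<longlonglongrightarrow> (\<Sum>k\<le>K. \<bar>pmf q k - pmf q k\<bar>) + (1 - measure_pmf.prob q {..K})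
              + (1 - measure_pmf.prob q {..K})"
    unfolding measure_measure_pmf_finite[OF finite_atMost] by (intro tendsto_intros assms)
  then have "eventually (\<lambda>n. (\<Sum>k\<le>K. \<bar>pmf (p n) k - pmf q k\<bar>) + (1 - measure_pmf.prob (p n) {..K})
              + (1 - measure_pmf.prob q {..K}) < y) sequentially"
    by (rule order_tendstoD(2)) (use K \<open>0 < y\<close> in simp)
  then show "eventually (\<lambda>n. tv_dist (p n) q < y) sequentially"
    by (rule eventually_mono) (use tv_dist_le in \<open>rule le_less_trans\<close>)
qed

section \<open>Galton--Watson processes in varying environment\<close>

text \<open>
  gen_pmf env j k m is the law of Z_{j+m} given Z_j = k, and pgf_comp env j m is the
  composition f_{j+1} \<circ> \<dots> \<circ> f_{j+m} of the offspring generating functions.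
\<close>

fun gen_pmf :: "(nat \<Rightarrow> nat pmf) \<Rightarrow> nat \<Rightarrow> nat \<Rightarrow> nat \<Rightarrow> nat pmf" where
  "gen_pmf env j k 0 = return_pmf k"
| "gen_pmf env j k (Suc m) = bind_pmf (gen_pmf env j k m) (conv_pow (env (j + m + 1)))"

fun pgf_comp :: "(nat \<Rightarrow> nat pmf) \<Rightarrow> nat \<Rightarrow> nat \<Rightarrow> real \<Rightarrow> real" where
  "pgf_comp env j 0 s = s"
| "pgf_comp env j (Suc m) s = pgf_comp env j m (pgf (env (j + m + 1)) s)"

lemma pgf_gen_pmf:
  "\<bar>s\<bar> \<le> 1 \<Longrightarrow> pgf (gen_pmf env j k m) s = pgf_comp env j m s ^ k"
proof (induction m arbitrary: s)
  case (Suc m)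
  let ?f = "env (j + m + 1)"
  have "pgf (gen_pmf env j k (Suc m)) s
      = measure_pmf.expectation (gen_pmf env j k m) (\<lambda>z. pgf (conv_pow ?f z) s)"
    using Suc.prems by (simp add: pgf_bind_pmf)
  also have "\<dots> = pgf (gen_pmf env j k m) (pgf ?f s)"
    by (simp add: pgf_conv_pow[OF Suc.prems] pgf_def[of "gen_pmf env j k m"])
  finally show ?case
    using Suc abs_pgf_le_1 by simp
qed simp

lemma length_gw_traj: "zs \<in> set_pmf (gw_traj env n) \<Longrightarrow> length zs = Suc n"
  by (induction n arbitrary: zs) auto

lemma gw_traj_nth_0: "map_pmf (\<lambda>zs. zs ! 0) (gw_traj env n) = return_pmf 1"
proof (induction n)
  case (Suc n)
  have "map_pmf (\<lambda>zs. zs ! 0) (gw_traj env (Suc n))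
      = bind_pmf (gw_traj env n) (\<lambda>zs. return_pmf (zs ! 0))"
    unfolding gw_traj.simps map_bind_pmf map_pmf_comp
  proof (intro bind_pmf_cong refl)
    fix zs
    assume "zs \<in> set_pmf (gw_traj env n)"
    then have "zs \<noteq> []"
      using length_gw_traj by fastforce
    then show "map_pmf (\<lambda>z. (zs @ [z]) ! 0) (conv_pow (env (Suc n)) (last zs)) = return_pmf (zs ! 0)"
      by (simp add: nth_append)
  qed
  then show ?case
    using Suc by (simp add: map_pmf_def)
qed simp

lemma gw_traj_pair_nth:
  "map_pmf (\<lambda>zs. (zs ! j, zs ! (j + m))) (gw_traj env (j + m))
   = bind_pmf (map_pmf (\<lambda>zs. zs ! j) (gw_traj env j)) (\<lambda>k. map_pmf (Pair k) (gen_pmf env j k m))"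
proof (induction m)
  case 0
  show ?case
    by (simp add: map_pmf_def bind_assoc_pmf bind_return_pmf)
next
  case (Suc m)
  have "map_pmf (\<lambda>zs. (zs ! j, zs ! (j + Suc m))) (gw_traj env (j + Suc m))
     = bind_pmf (gw_traj env (j + m))
         (\<lambda>zs. map_pmf (Pair (zs ! j)) (conv_pow (env (j + m + 1)) (zs ! (j + m))))"
    unfolding add_Suc_right gw_traj.simps map_bind_pmf map_pmf_comp
  proof (intro bind_pmf_cong refl)
    fix zs
    assume "zs \<in> set_pmf (gw_traj env (j + m))"
    then have "length zs = Suc (j + m)"
      by (rule length_gw_traj)
    moreover from this have "last zs = zs ! (j + m)"
      using last_conv_nth[of zs] by force
    ultimately show "map_pmf (\<lambda>z. ((zs @ [z]) ! j, (zs @ [z]) ! Suc (j + m))) (conv_pow (env (Suc (j + m))) (last zs))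
        = map_pmf (Pair (zs ! j)) (conv_pow (env (j + m + 1)) (zs ! (j + m)))"
      by (simp add: nth_append last_conv_nth)
  qed
  also have "\<dots> = bind_pmf (map_pmf (\<lambda>zs. (zs ! j, zs ! (j + m))) (gw_traj env (j + m)))
         (\<lambda>(k, y). map_pmf (Pair k) (conv_pow (env (j + m + 1)) y))"
    by (simp add: bind_map_pmf)
  finally show ?case
    unfolding Suc by (simp add: bind_assoc_pmf bind_map_pmf map_bind_pmf)
qed

lemma gw_traj_nth: "map_pmf (\<lambda>zs. zs ! n) (gw_traj env n) = gen_pmf env 0 1 n"
  using arg_cong[OF gw_traj_pair_nth[of 0 n env], of "map_pmf snd"]
  by (simp add: map_pmf_comp gw_traj_nth_0 bind_return_pmf)

lemma measure_gw_traj_extinct: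
  "measure_pmf.prob (gw_traj env (n + m)) {zs. zs ! n = k \<and> zs ! (n + m) = 0}
   = pmf (gen_pmf env 0 1 n) k * pgf_comp env n m 0 ^ k"
proof -
  have "measure_pmf.prob (gw_traj env (n + m)) {zs. zs ! n = k \<and> zs ! (n + m) = 0}
      = pmf (map_pmf (\<lambda>zs. (zs ! n, zs ! (n + m))) (gw_traj env (n + m))) (k, 0)"
    by (simp add: pmf_map vimage_def)
  also have "\<dots> = measure_pmf.expectation (gen_pmf env 0 1 n)
                    (\<lambda>k'. pmf (map_pmf (Pair k') (gen_pmf env n k' m)) (k, 0))"
    by (simp add: gw_traj_pair_nth gw_traj_nth pmf_bind)
  also have "(\<lambda>k'. pmf (map_pmf (Pair k') (gen_pmf env n k' m)) (k, 0))
      = (\<lambda>k'. indicator {k} k' * pmf (gen_pmf env n k m) 0)"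
  proof
    fix k'
    show "pmf (map_pmf (Pair k') (gen_pmf env n k' m)) (k, 0) = indicator {k} k' * pmf (gen_pmf env n k m) 0"
      using pmf_map_inj'[of "Pair k" "gen_pmf env n k m" 0]
      by (cases "k' = k") (auto simp: inj_on_def intro!: pmf_map_outside)
  qed
  also have "pmf (gen_pmf env n k m) 0 = pgf_comp env n m 0 ^ k"
    by (simp flip: pgf_0 add: pgf_gen_pmf)
  finally show ?thesis
    by (simp add: measure_pmf_single)
qed

section \<open>Linear fractional environments\<close>

lemma Pi_env_0 [simp]: "Pi_env A 0 \<omega> = 1"
  by (simp add: Pi_env_def)

lemma Rm1_env_0 [simp]: "Rm1_env A B 0 \<omega> = 0"
  by (simp add: Rm1_env_def)

lemma Pi_env_Suc: "Pi_env A (Suc k) \<omega> = Pi_env A k \<omega> * A (Suc k) \<omega>"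
  unfolding Pi_env_def by simp

lemma Rm1_env_Suc: "Rm1_env A B (Suc k) \<omega> = Rm1_env A B k \<omega> + B (Suc k) \<omega> / Pi_env A (Suc k) \<omega>"
  unfolding Rm1_env_def by simp

locale LF_environment =
  fixes A B :: "nat \<Rightarrow> 'a \<Rightarrow> real" and \<omega> :: 'a
  assumes A_pos: "1 \<le> i \<Longrightarrow> 0 < A i \<omega>"
    and B_nonneg: "1 \<le> i \<Longrightarrow> 0 \<le> B i \<omega>"
    and A_plus_B_ge_1: "1 \<le> i \<Longrightarrow> 1 \<le> A i \<omega> + B i \<omega>"
begin

lemma Pi_env_pos: "0 < Pi_env A n \<omega>"
  unfolding Pi_env_def using A_pos by (intro prod_pos) auto

lemma Rm1_env_mono: "k \<le> k' \<Longrightarrow> Rm1_env A B k \<omega> \<le> Rm1_env A B k' \<omega>"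
  unfolding Rm1_env_def
  by (rule sum_mono2) (auto intro!: divide_nonneg_pos B_nonneg Pi_env_pos)

text \<open>
  Generation i of the reversed environment (N:1) has the parameters of index N - i + 1, so the
  generations j + 1, ..., j + m use the indices N - j - m + 1, ..., N - j.
\<close>

lemma pgf_comp_rev_env:
  assumes "j + m \<le> N" "0 \<le> s" "s < 1"
  shows "pgf_comp (rev_env A B N \<omega>) j m s
       = 1 - 1 / (Pi_env A (N - j) \<omega> / Pi_env A (N - j - m) \<omega> / (1 - s)
                  + Pi_env A (N - j) \<omega> * (Rm1_env A B (N - j) \<omega> - Rm1_env A B (N - j - m) \<omega>))"
  using assms
proof (induction m arbitrary: s)
  case 0
  then show ?case
    using Pi_env_pos[of "N - j"] by simp
next
  case (Suc m)
  define k where "k = N - j - Suc m"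
  define a where "a = A (Suc k) \<omega>"
  define b where "b = B (Suc k) \<omega>"
  have k: "N - j - m = Suc k"
    using Suc.prems by (simp add: k_def)
  have ab: "0 < a" "0 \<le> b" "1 \<le> a + b"
    using A_pos B_nonneg A_plus_B_ge_1 by (simp_all add: a_def b_def)
  have "rev_env A B N \<omega> (j + m + 1) = LF a b"
    unfolding rev_env_def a_def b_def using Suc.prems by (simp add: k_def Suc_diff_Suc)
  then have step: "pgf_comp (rev_env A B N \<omega>) j (Suc m) s
      = pgf_comp (rev_env A B N \<omega>) j m (1 - 1 / (a / (1 - s) + b))"
    using ab Suc.prems by (simp add: pgf_LF)
  have X: "0 < a / (1 - s) + b"
    using ab Suc.prems by (simp add: add_pos_nonneg)
  have "0 \<le> 1 - 1 / (a / (1 - s) + b)"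
    using ab Suc.prems pgf_nonneg[of s "LF a b"] pgf_LF[of a b s] by simp
  moreover have "1 - 1 / (a / (1 - s) + b) < 1"
    using X by simp
  ultimately have IH: "pgf_comp (rev_env A B N \<omega>) j m (1 - 1 / (a / (1 - s) + b))
      = 1 - 1 / (Pi_env A (N - j) \<omega> / Pi_env A (Suc k) \<omega> * (a / (1 - s) + b)
                  + Pi_env A (N - j) \<omega> * (Rm1_env A B (N - j) \<omega> - Rm1_env A B (Suc k) \<omega>))"
    using Suc k by simp
  have "Pi_env A (N - j) \<omega> / Pi_env A (Suc k) \<omega> * (a / (1 - s) + b)
          + Pi_env A (N - j) \<omega> * (Rm1_env A B (N - j) \<omega> - Rm1_env A B (Suc k) \<omega>)
      = Pi_env A (N - j) \<omega> / Pi_env A k \<omega> / (1 - s)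
          + Pi_env A (N - j) \<omega> * (Rm1_env A B (N - j) \<omega> - Rm1_env A B k \<omega>)"
    unfolding Pi_env_Suc Rm1_env_Suc a_def[symmetric] b_def[symmetric]
    using ab Suc.prems Pi_env_pos[of k] by (simp add: field_simps)
  moreover have "N - j - Suc m = k"
    by (simp add: k_def)
  ultimately show ?case
    using step IH by simp
qed

lemma gen_pmf_rev_env:
  assumes "j + m \<le> N"
  shows "gen_pmf (rev_env A B N \<omega>) j 1 m
       = LF (Pi_env A (N - j) \<omega> / Pi_env A (N - j - m) \<omega>)
            (Pi_env A (N - j) \<omega> * (Rm1_env A B (N - j) \<omega> - Rm1_env A B (N - j - m) \<omega>))"
  using assms by (intro LF_eqI[symmetric]) (simp add: pgf_gen_pmf pgf_comp_rev_env)

lemma extinction_prob_rev_env: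
  "pgf_comp (rev_env A B (n + l) \<omega>) n l 0 = 1 - 1 / c_env A B l \<omega>"
  using pgf_comp_rev_env[of n l "n + l" 0] by (simp add: c_env_def algebra_simps)

lemma one_le_c_env: "1 \<le> c_env A B l \<omega>"
proof -
  have "0 < c_env A B l \<omega>"
    using Pi_env_pos[of l] Rm1_env_mono[of 0 l] by (simp add: c_env_def)
  moreover have "0 \<le> pgf (gen_pmf (rev_env A B l \<omega>) 0 1 l) 0"
    by (rule pgf_nonneg) simp
  then have "0 \<le> 1 - 1 / c_env A B l \<omega>"
    using extinction_prob_rev_env[of 0 l] by (simp add: pgf_gen_pmf)
  ultimately show ?thesis
    by (simp add: field_simps)
qed

text \<open>
  The Z_n individuals die out independently within l generations, each with probability
  1 - 1 / c (lemmas measure_gw_traj_extinct and extinction_prob_rev_env), and Z_n is linear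
  fractional; lemma pmf_LF_Suc_tilted then identifies the conditional law.
\<close>

lemma survival_then_extinction:
  fixes n l :: nat
  defines "S \<equiv> {zs. 0 < zs ! n \<and> zs ! (n + l) = 0}"
    and "c \<equiv> c_env A B l \<omega>"
    and "T \<equiv> Pi_env A l \<omega> * (Rm1_env A B (n + l) \<omega> - Rm1_env A B l \<omega>)"
  shows "Pi_env A (n + l) \<omega> / Pi_env A l \<omega> * measure_pmf.prob (Pq A B (n + l) \<omega>) S
           = (1 - 1 / c) / (1 + T / c) * (1 / (1 + T))"
    and "1 < c \<Longrightarrow> map_pmf (\<lambda>zs. zs ! n) (cond_pmf (Pq A B (n + l) \<omega>) S)
                     = Geom_plus (1 / c + (1 - 1 / c) * (1 / (1 + T)))"
proof -
  define env where "env = rev_env A B (n + l) \<omega>"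
  define \<alpha> where "\<alpha> = Pi_env A (n + l) \<omega> / Pi_env A l \<omega>"
  define q where "q = 1 - 1 / c"
  have \<alpha>: "0 < \<alpha>"
    using Pi_env_pos by (simp add: \<alpha>_def)
  have T: "0 \<le> T"
    using Rm1_env_mono[of l "n + l"] Pi_env_pos[of l] by (simp add: T_def)
  have c: "1 \<le> c"
    unfolding c_def by (rule one_le_c_env)
  have q: "0 \<le> q" "q \<le> 1" "1 / c = 1 - q"
    using c by (simp_all add: q_def)
  have \<alpha>T: "Pi_env A (n + l) \<omega> * (Rm1_env A B (n + l) \<omega> - Rm1_env A B l \<omega>) = \<alpha> * T"
    using Pi_env_pos[of l] by (simp add: \<alpha>_def T_def)
  have Z: "gen_pmf env 0 1 n = LF \<alpha> (\<alpha> * T)"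
    using gen_pmf_rev_env[of 0 n "n + l"] by (simp add: env_def \<alpha>_def[symmetric] \<alpha>T)
  have "0 \<le> pgf (gen_pmf env 0 1 n) 0"
    by (rule pgf_nonneg) simp
  then have "0 \<le> 1 - 1 / (\<alpha> + \<alpha> * T)"
    using pgf_comp_rev_env[of 0 n "n + l" 0]
    by (simp add: pgf_gen_pmf env_def \<alpha>_def[symmetric] \<alpha>T)
  moreover have "0 < \<alpha> + \<alpha> * T"
    using \<alpha> T by (simp add: add_pos_nonneg)
  ultimately have \<alpha>T_ge_1: "1 \<le> \<alpha> + \<alpha> * T"
    by (simp add: field_simps)
  have ext: "pgf_comp env n l 0 = q"
    using extinction_prob_rev_env by (simp add: env_def q_def c_def)
  define C where "C = q * \<alpha> / ((\<alpha> + \<alpha> * T) * (\<alpha> + \<alpha> * T - q * (\<alpha> * T)))"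
  define \<theta> where "\<theta> = 1 - q * (\<alpha> * T) / (\<alpha> + \<alpha> * T)"
  have fibres: "measure_pmf.prob (Pq A B (n + l) \<omega>) (S \<inter> (\<lambda>zs. zs ! n) -` {k}) = C * pmf (Geom_plus \<theta>) k"
    for k
  proof (cases k)
    case 0
    then have "S \<inter> (\<lambda>zs. zs ! n) -` {k} = {}"
      by (auto simp: S_def)
    then show ?thesis
      using 0 by simp
  next
    case (Suc k')
    have "S \<inter> (\<lambda>zs. zs ! n) -` {k} = {zs. zs ! n = Suc k' \<and> zs ! (n + l) = 0}"
      by (auto simp: S_def Suc)
    then show ?thesis
      using measure_gw_traj_extinct[of env n l k, unfolded Z ext] pmf_LF_Suc_tilted[of \<alpha> "\<alpha> * T" q k'] \<alpha> T \<alpha>T_ge_1 q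
      by (simp add: Pq_def env_def[symmetric] C_def \<theta>_def Suc)
  qed
  define U where "U = 1 + T - q * T"
  have "T / c = T * (1 - q)"
    unfolding q(3)[symmetric] by simp
  then have U: "0 < U" "1 + T / c = U"
    using q T mult_left_le_one_le[of T q] by (simp_all add: U_def algebra_simps)
  define V where "V = 1 + T"
  have V: "0 < V"
    using T by (simp add: V_def)
  have denominators: "\<alpha> + \<alpha> * T = \<alpha> * V" "\<alpha> * V - q * (\<alpha> * T) = \<alpha> * U"
    by (simp_all add: U_def V_def algebra_simps)
  have "\<alpha> * C = (1 - 1 / c) / (1 + T / c) * (1 / (1 + T))"
    unfolding C_def denominators U(2) q(3) V_def[symmetric] using \<alpha> V U(1) by (simp add: field_simps)
  then show "\<alpha> * measure_pmf.prob (Pq A B (n + l) \<omega>) S = (1 - 1 / c) / (1 + T / c) * (1 / (1 + T))"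
    using measure_eq_if_fibres_proportional[OF fibres] by simp
  have "\<theta> = 1 / c + (1 - 1 / c) * (1 / (1 + T))"
    unfolding \<theta>_def denominators(1) q(3) V_def[symmetric]
    using \<alpha> V by (simp add: field_simps) (simp add: V_def algebra_simps)
  moreover assume "1 < c"
  then have "C \<noteq> 0"
    using \<alpha> V U(1) unfolding C_def denominators by (simp add: q_def)
  ultimately show "map_pmf (\<lambda>zs. zs ! n) (cond_pmf (Pq A B (n + l) \<omega>) S) = Geom_plus (1 / c + (1 - 1 / c) * (1 / (1 + T)))"
    using map_cond_pmf_eq_if_fibres_proportional[OF fibres] by simp
qed

lemma quenched_limits:
  assumes "convergent (\<lambda>n. Rm1_env A B n \<omega>)"
  shows "(c_env A B l \<omega> > 1 \<longrightarrow>
           ((\<lambda>n. tv_dist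
               (map_pmf (\<lambda>zs. zs ! n)
                  (cond_pmf (Pq A B (n + l) \<omega>) {zs. zs ! n > 0 \<and> zs ! (n + l) = 0}))
               (Geom_plus (theta_env A B l \<omega>))) \<longlonglongrightarrow> 0)
         \<and> ((\<lambda>n. measure_pmf.expectation
                 (cond_pmf (Pq A B (n + l) \<omega>) {zs. zs ! n > 0 \<and> zs ! (n + l) = 0})
                 (\<lambda>zs. real (zs ! n))) \<longlonglongrightarrow> 1 / theta_env A B l \<omega>))
      \<and> ((\<lambda>n. Pi_env A (n + l) \<omega> / Pi_env A l \<omega>
               * measure_pmf.prob (Pq A B (n + l) \<omega>) {zs. zs ! n > 0 \<and> zs ! (n + l) = 0})
          \<longlonglongrightarrow> (1 - 1 / c_env A B l \<omega>) / (1 + Rm1_tail A B l \<omega> / c_env A B l \<omega>)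
                * (1 / (1 + Rm1_tail A B l \<omega>)))"
proof (intro conjI impI)
  let ?c = "c_env A B l \<omega>" and ?T = "Rm1_tail A B l \<omega>"
    and ?S = "\<lambda>n. {zs. zs ! n > 0 \<and> zs ! (n + l) = (0::nat)}"
  define Tn where "Tn n = Pi_env A l \<omega> * (Rm1_env A B (n + l) \<omega> - Rm1_env A B l \<omega>)" for n
  have c: "1 \<le> ?c"
    by (rule one_le_c_env)
  have Tn: "0 \<le> Tn n" for n
    using Rm1_env_mono[of l "n + l"] Pi_env_pos[of l] by (simp add: Tn_def)
  have "(\<lambda>n. Rm1_env A B (n + l) \<omega>) \<longlonglongrightarrow> Rm1_inf A B \<omega>"
    using assms by (intro LIMSEQ_ignore_initial_segment) (simp add: Rm1_inf_def convergent_LIMSEQ_iff)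
  then have Tn_lim: "Tn \<longlonglongrightarrow> ?T"
    unfolding Tn_def Rm1_tail_def by (intro tendsto_intros)
  have T: "0 \<le> ?T"
    using Tn by (intro LIMSEQ_le_const[OF Tn_lim]) auto
  have "0 < 1 + ?T / ?c" "0 < 1 + ?T"
    using c T by (simp_all add: add_pos_nonneg)
  then have "(\<lambda>n. (1 - 1 / ?c) / (1 + Tn n / ?c) * (1 / (1 + Tn n)))
      \<longlonglongrightarrow> (1 - 1 / ?c) / (1 + ?T / ?c) * (1 / (1 + ?T))"
    by (intro tendsto_intros Tn_lim) (use c in simp_all)
  moreover have "Pi_env A (n + l) \<omega> / Pi_env A l \<omega> * measure_pmf.prob (Pq A B (n + l) \<omega>) (?S n)
      = (1 - 1 / ?c) / (1 + Tn n / ?c) * (1 / (1 + Tn n))" for n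
    unfolding Tn_def by (rule survival_then_extinction(1))
  ultimately show "(\<lambda>n. Pi_env A (n + l) \<omega> / Pi_env A l \<omega> * measure_pmf.prob (Pq A B (n + l) \<omega>) (?S n))
      \<longlonglongrightarrow> (1 - 1 / ?c) / (1 + ?T / ?c) * (1 / (1 + ?T))"
    by (simp only:)
  assume "1 < ?c"
  define \<theta> where "\<theta> t = 1 / ?c + (1 - 1 / ?c) * (1 / (1 + t))" for t
  have \<theta>: "0 < \<theta> t \<and> \<theta> t \<le> 1" if "0 \<le> t" for t
  proof -
    have "(1 - 1 / ?c) * (1 / (1 + t)) \<le> 1 - 1 / ?c"
      using c that by (intro mult_left_le) simp_all
    then show ?thesis
      using c that by (simp add: \<theta>_def add_pos_nonneg)
  qed
  have law: "map_pmf (\<lambda>zs. zs ! n) (cond_pmf (Pq A B (n + l) \<omega>) (?S n)) = Geom_plus (\<theta> (Tn n))" for n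
    unfolding \<theta>_def Tn_def using \<open>1 < ?c\<close> by (rule survival_then_extinction(2))
  have \<theta>_T: "\<theta> ?T = theta_env A B l \<omega>"
    by (simp add: \<theta>_def theta_env_def)
  have \<theta>_lim: "(\<lambda>n. \<theta> (Tn n)) \<longlonglongrightarrow> \<theta> ?T"
    unfolding \<theta>_def using c T by (intro tendsto_intros Tn_lim) (simp_all add: add_pos_nonneg)
  have "(\<lambda>n. tv_dist (Geom_plus (\<theta> (Tn n))) (Geom_plus (\<theta> ?T))) \<longlonglongrightarrow> 0"
    using \<theta> Tn T by (intro tendsto_tv_dist_if_tendsto_pmf tendsto_pmf_Geom_plus \<theta>_lim) auto
  then show "(\<lambda>n. tv_dist (map_pmf (\<lambda>zs. zs ! n) (cond_pmf (Pq A B (n + l) \<omega>) (?S n)))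
      (Geom_plus (theta_env A B l \<omega>))) \<longlonglongrightarrow> 0"
    unfolding law \<theta>_T .
  have "measure_pmf.expectation (cond_pmf (Pq A B (n + l) \<omega>) (?S n)) (\<lambda>zs. real (zs ! n))
      = measure_pmf.expectation (Geom_plus (\<theta> (Tn n))) real" for n
    unfolding law[symmetric] by simp
  also have "measure_pmf.expectation (Geom_plus (\<theta> (Tn n))) real = 1 / \<theta> (Tn n)" for n
    using \<theta>[OF Tn] by (simp add: expectation_Geom_plus)
  moreover have "(\<lambda>n. 1 / \<theta> (Tn n)) \<longlonglongrightarrow> 1 / \<theta> ?T"
    using \<theta>[OF T] by (intro tendsto_intros \<theta>_lim) simp
  ultimately show "(\<lambda>n. measure_pmf.expectation (cond_pmf (Pq A B (n + l) \<omega>) (?S n)) (\<lambda>zs. real (zs ! n)))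
      \<longlonglongrightarrow> 1 / theta_env A B l \<omega>"
    unfolding \<theta>_T by (simp only:)
qed

end

lemma AE_of_identically_distributed:
  assumes "X \<in> borel_measurable M" "Y \<in> borel_measurable M"
    and "distr M borel X = distr M borel Y"
    and "{x \<in> space borel. P x} \<in> sets borel"
    and "AE \<omega> in M. P (Y \<omega>)"
  shows "AE \<omega> in M. P (X \<omega>)"
proof -
  have "AE x in distr M borel Y. P x"
    using assms(2,4,5) by (subst AE_distr_iff) auto
  then have "AE x in distr M borel X. P x"
    unfolding assms(3) .
  then show ?thesis
    using assms(1,4) by (subst (asm) AE_distr_iff) auto
qed

theorem theorem3p2:
  fixes M :: "'a measure" and A B :: "nat \<Rightarrow> 'a \<Rightarrow> real" and l :: nat
  assumes "prob_space M"
    and rv: "\<And>n. n \<ge> 1 \<Longrightarrow> (\<lambda>\<omega>. (A n \<omega>, B n \<omega>)) \<in> borel_measurable M"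
    and indep: "prob_space.indep_vars M (\<lambda>_. borel) (\<lambda>n \<omega>. (A n \<omega>, B n \<omega>)) {1..}"
    and ident: "\<And>n. n \<ge> 1 \<Longrightarrow>
        distr M borel (\<lambda>\<omega>. (A n \<omega>, B n \<omega>)) = distr M borel (\<lambda>\<omega>. (A 1 \<omega>, B 1 \<omega>))"
    and supp: "AE \<omega> in M. A 1 \<omega> > 0 \<and> B 1 \<omega> > 0 \<and> A 1 \<omega> + B 1 \<omega> \<ge> 1"
    and subcrit: "AE \<omega> in M. convergent (\<lambda>n. Rm1_env A B n \<omega>)
                    \<and> filterlim (\<lambda>n. R_env A B n \<omega>) at_top sequentially"
    and l: "l \<ge> 1"
  shows "AE \<omega> in M.
      (c_env A B l \<omega> > 1 \<longrightarrow>
         ((\<lambda>n. tv_dist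
             (map_pmf (\<lambda>zs. zs ! n)
                (cond_pmf (Pq A B (n + l) \<omega>) {zs. zs ! n > 0 \<and> zs ! (n + l) = 0}))
             (Geom_plus (theta_env A B l \<omega>))) \<longlonglongrightarrow> 0)
       \<and> ((\<lambda>n. measure_pmf.expectation
               (cond_pmf (Pq A B (n + l) \<omega>) {zs. zs ! n > 0 \<and> zs ! (n + l) = 0})
               (\<lambda>zs. real (zs ! n))) \<longlonglongrightarrow> 1 / theta_env A B l \<omega>))
    \<and> ((\<lambda>n. Pi_env A (n + l) \<omega> / Pi_env A l \<omega>
             * measure_pmf.prob (Pq A B (n + l) \<omega>) {zs. zs ! n > 0 \<and> zs ! (n + l) = 0})
        \<longlonglongrightarrow> (1 - 1 / c_env A B l \<omega>) / (1 + Rm1_tail A B l \<omega> / c_env A B l \<omega>)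
              * (1 / (1 + Rm1_tail A B l \<omega>)))"
proof -
  let ?good = "\<lambda>x :: real \<times> real. 0 < fst x \<and> 0 < snd x \<and> 1 \<le> fst x + snd x"
  have "{x \<in> space borel. ?good x} = {x. 0 < fst x} \<inter> {x. 0 < snd x} \<inter> {x. 1 \<le> fst x + snd x}"
    by auto
  also have "\<dots> \<in> sets borel"
    by (intro sets.Int borel_open borel_closed open_Collect_less closed_Collect_le continuous_intros)
  finally have "{x \<in> space borel. ?good x} \<in> sets borel" .
  then have "AE \<omega> in M. 0 < A i \<omega> \<and> 0 < B i \<omega> \<and> 1 \<le> A i \<omega> + B i \<omega>" if "1 \<le> i" for i
    using AE_of_identically_distributed[OF rv[OF that] rv[of 1] ident[OF that], of ?good] supp
    by simp
  then have "AE \<omega> in M. \<forall>i. 1 \<le> i \<longrightarrow> 0 < A i \<omega> \<and> 0 < B i \<omega> \<and> 1 \<le> A i \<omega> + B i \<omega>"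
    by (simp add: AE_all_countable)
  with subcrit show ?thesis
  proof eventually_elim
    case (elim \<omega>)
    then interpret LF_environment A B \<omega>
      by unfold_locales (simp_all add: less_imp_le)
    show ?case
      using elim quenched_limits by blast
  qed
qed

end
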